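(* Let $\mathcal A,\mathcal B$ be modal categories, $\Sigma$ a nonempty set, and $F:\mathcal A\to\mathcal B$ a concrete functor. Then $F$ preserves the interpretation of $\mathcal L^D_\Sigma$ if and only if it preserves the interpretation of the basic modal language $\mathcal L$. Here preserving $\mathcal L^D_\Sigma$ means: for every set $X$, every tuple $(A_a)_{a\in\Sigma}$ of objects of $\mathcal A_X$, every $V:\mathsf P\to\wp(X)$ and every $\varphi\in\mathcal L^D_\Sigma$, $[\![\varphi]\!]^V_{(A_a)_a}=[\![\varphi]\!]^V_{(FA_a)_a}$; and preserving $\mathcal L$ means $[\![\varphi]\!]^V_A=[\![\varphi]\!]^V_{FA}$ for all $A\in\mathcal A_X$, $V$, $\varphi\in\mathcal L$.
   Context: A modal category is a topological category $\mathcal A$ over $\mathbf{Set}$ (faithful forgetful functor, every structured source has exactly one initial lift, fibres $\mathcal A_X$ of objects over $X$) equipped with a concrete functor $(-)^+:\mathcal A\to\mathbf{CABAO}$, where $\mathbf{CABAO}$ has objects $(X,m)$, $m:\wp(X)\to\wp(X)$ arbitrary, and morphisms $f:(X,m)\to(Y,n)$ functions with $f^{-1}(n(T))\subseteq m(f^{-1}(T))$ for all $T$; write $A^+$ for the operator of $A$. A concrete functor commutes with forgetful functors. Fix a nonempty set $\mathsf P$ of propositional variables. $\mathcal L$: formulas $p\mid\varphi\wedge\psi\mid\neg\varphi\mid\Box\varphi$, with $[\![p]\!]^V_A=V(p)$, $\wedge\mapsto\cap$, $\neg\mapsto$ complement in $X$, $[\![\Box\varphi]\!]^V_A=A^+([\![\varphi]\!]^V_A)$.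 $\mathcal L^D_\Sigma$: formulas $p\mid\varphi\wedge\psi\mid\neg\varphi\mid\Box_a\varphi\mid K_ab$ for $a,b\in\Sigma$, interpreted on a tuple $(A_a)_{a\in\Sigma}$ in $\mathcal A_X$ with $V:\mathsf P\to\wp(X)$ by the Boolean clauses, $[\![\Box_a\varphi]\!]^V=A_a^+([\![\varphi]\!]^V)$, and $[\![K_ab]\!]^V=\{x\in X:\forall S\subseteq X\,(x\in A_b^+(S)\Rightarrow x\in A_a^+(S))\}$. *)

theory Defs
  imports Main "HOL-Library.FuncSet"
begin

text \<open>A concrete category is given by an object type 'o, an underlying-set map U and
  hom-sets Hom A B, whose elements are functions between the underlying sets
  (faithfulness: morphisms are determined by their underlying functions on U A).\<close>

definition concrete_cat :: "('o \<Rightarrow> 'u set) \<Rightarrow> ('o \<Rightarrow> 'o \<Rightarrow> ('u \<Rightarrow> 'u) set) \<Rightarrow> bool" where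
  "concrete_cat U Hom \<longleftrightarrow>
     (\<forall>A. (\<lambda>x. x) \<in> Hom A A) \<and>
     (\<forall>A B f. f \<in> Hom A B \<longrightarrow> f \<in> U A \<rightarrow> U B) \<and>
     (\<forall>A B C f g. f \<in> Hom A B \<longrightarrow> g \<in> Hom B C \<longrightarrow> g \<circ> f \<in> Hom A C) \<and>
     (\<forall>A B f g. f \<in> Hom A B \<longrightarrow> (\<forall>x\<in>U A. f x = g x) \<longrightarrow> g \<in> Hom A B)"

definition initial_lift ::
  "('o \<Rightarrow> 'u set) \<Rightarrow> ('o \<Rightarrow> 'o \<Rightarrow> ('u \<Rightarrow> 'u) set) \<Rightarrow> 'u set \<Rightarrow> ('o \<times> ('u \<Rightarrow> 'u)) set \<Rightarrow> 'o \<Rightarrow> bool" where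
  "initial_lift U Hom X src B \<longleftrightarrow>
     U B = X \<and>
     (\<forall>(A, f)\<in>src. f \<in> Hom B A) \<and>
     (\<forall>C g. g \<in> U C \<rightarrow> X \<longrightarrow> (g \<in> Hom C B \<longleftrightarrow> (\<forall>(A, f)\<in>src. f \<circ> g \<in> Hom C A)))"

definition topological_cat :: "('o \<Rightarrow> 'u set) \<Rightarrow> ('o \<Rightarrow> 'o \<Rightarrow> ('u \<Rightarrow> 'u) set) \<Rightarrow> bool" where
  "topological_cat U Hom \<longleftrightarrow>
     concrete_cat U Hom \<and>
     (\<forall>X src. (\<forall>(A, f)\<in>src. f \<in> X \<rightarrow> U A) \<longrightarrow> (\<exists>!B. initial_lift U Hom X src B))"

text \<open>A concrete functor into CABAO: to each object A an operator op A on \<wp>(U A)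
  (values on non-subsets are irrelevant), such that every morphism f : A \<rightarrow> B
  satisfies f\<inverse>(op B T) \<subseteq> op A (f\<inverse>(T)) for all T \<subseteq> U B (preimages taken in U A).\<close>

definition cabao_functor :: "('o \<Rightarrow> 'u set) \<Rightarrow> ('o \<Rightarrow> 'o \<Rightarrow> ('u \<Rightarrow> 'u) set) \<Rightarrow> ('o \<Rightarrow> 'u set \<Rightarrow> 'u set) \<Rightarrow> bool" where
  "cabao_functor U Hom op \<longleftrightarrow>
     (\<forall>A S. S \<subseteq> U A \<longrightarrow> op A S \<subseteq> U A) \<and>
     (\<forall>A B f T. f \<in> Hom A B \<longrightarrow> T \<subseteq> U B \<longrightarrow>
        f -` op B T \<inter> U A \<subseteq> op A (f -` T \<inter> U A))"

definition modal_cat :: "('o \<Rightarrow> 'u set) \<Rightarrow> ('o \<Rightarrow> 'o \<Rightarrow> ('u \<Rightarrow> 'u) set) \<Rightarrow> ('o \<Rightarrow> 'u set \<Rightarrow> 'u set) \<Rightarrow> bool" where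
  "modal_cat U Hom op \<longleftrightarrow> topological_cat U Hom \<and> cabao_functor U Hom op"

definition concrete_functor ::
  "('a \<Rightarrow> 'u set) \<Rightarrow> ('a \<Rightarrow> 'a \<Rightarrow> ('u \<Rightarrow> 'u) set) \<Rightarrow>
   ('b \<Rightarrow> 'u set) \<Rightarrow> ('b \<Rightarrow> 'b \<Rightarrow> ('u \<Rightarrow> 'u) set) \<Rightarrow> ('a \<Rightarrow> 'b) \<Rightarrow> bool" where
  "concrete_functor U1 Hom1 U2 Hom2 F \<longleftrightarrow>
     (\<forall>A. U2 (F A) = U1 A) \<and>
     (\<forall>A B f. f \<in> Hom1 A B \<longrightarrow> f \<in> Hom2 (F A) (F B))"

datatype 'p fm = Var 'p | And "'p fm" "'p fm" | Neg "'p fm" | Box "'p fm"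

datatype ('p, 'i) dfm = DVar 'p | DAnd "('p, 'i) dfm" "('p, 'i) dfm" | DNeg "('p, 'i) dfm"
  | DBox 'i "('p, 'i) dfm" | K 'i 'i

primrec sem :: "('u set \<Rightarrow> 'u set) \<Rightarrow> 'u set \<Rightarrow> ('p \<Rightarrow> 'u set) \<Rightarrow> 'p fm \<Rightarrow> 'u set" where
  "sem m X V (Var p) = V p"
| "sem m X V (And \<phi> \<psi>) = sem m X V \<phi> \<inter> sem m X V \<psi>"
| "sem m X V (Neg \<phi>) = X - sem m X V \<phi>"
| "sem m X V (Box \<phi>) = m (sem m X V \<phi>)"

primrec dsem :: "('i \<Rightarrow> 'u set \<Rightarrow> 'u set) \<Rightarrow> 'u set \<Rightarrow> ('p \<Rightarrow> 'u set) \<Rightarrow> ('p, 'i) dfm \<Rightarrow> 'u set" where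
  "dsem m X V (DVar p) = V p"
| "dsem m X V (DAnd \<phi> \<psi>) = dsem m X V \<phi> \<inter> dsem m X V \<psi>"
| "dsem m X V (DNeg \<phi>) = X - dsem m X V \<phi>"
| "dsem m X V (DBox a \<phi>) = m a (dsem m X V \<phi>)"
| "dsem m X V (K a b) = {x \<in> X. \<forall>S. S \<subseteq> X \<longrightarrow> x \<in> m b S \<longrightarrow> x \<in> m a S}"

definition preserves_L ::
  "('a \<Rightarrow> 'u set) \<Rightarrow> ('a \<Rightarrow> 'u set \<Rightarrow> 'u set) \<Rightarrow> ('b \<Rightarrow> 'u set \<Rightarrow> 'u set) \<Rightarrow> ('a \<Rightarrow> 'b)
   \<Rightarrow> 'p itself \<Rightarrow> bool" where
  "preserves_L U1 op1 op2 F (_ :: 'p itself) \<longleftrightarrow>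
     (\<forall>X A (V :: 'p \<Rightarrow> 'u set) \<phi>. U1 A = X \<longrightarrow> (\<forall>p. V p \<subseteq> X) \<longrightarrow>
        sem (op1 A) X V \<phi> = sem (op2 (F A)) X V \<phi>)"

definition preserves_LD ::
  "('a \<Rightarrow> 'u set) \<Rightarrow> ('a \<Rightarrow> 'u set \<Rightarrow> 'u set) \<Rightarrow> ('b \<Rightarrow> 'u set \<Rightarrow> 'u set) \<Rightarrow> ('a \<Rightarrow> 'b)
   \<Rightarrow> 'p itself \<Rightarrow> 'i itself \<Rightarrow> bool" where
  "preserves_LD U1 op1 op2 F (_ :: 'p itself) (_ :: 'i itself) \<longleftrightarrow>
     (\<forall>X (A :: 'i \<Rightarrow> 'a) (V :: 'p \<Rightarrow> 'u set) (\<phi> :: ('p, 'i) dfm).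
        (\<forall>a. U1 (A a) = X) \<longrightarrow> (\<forall>p. V p \<subseteq> X) \<longrightarrow>
        dsem (\<lambda>a. op1 (A a)) X V \<phi> = dsem (\<lambda>a. op2 (F (A a))) X V \<phi>)"

end

theory Submission
  imports Defs
begin

text \<open>Both languages are preserved exactly when F leaves the modal operator of every
  object unchanged on subsets of its carrier: this condition makes the two semantics
  agree by induction on formulas, and conversely it is read off from the formula
  \<open>\<box>p\<close> (resp. \<open>\<box>\<^sub>a p\<close>) under the valuation sending every variable to S.\<close>

definition preserves_operators ::
  "('a \<Rightarrow> 'u set) \<Rightarrow> ('a \<Rightarrow> 'u set \<Rightarrow> 'u set) \<Rightarrow> ('b \<Rightarrow> 'u set \<Rightarrow> 'u set) \<Rightarrow> ('a \<Rightarrow> 'b) \<Rightarrow> bool"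
where
  "preserves_operators U op1 op2 F \<longleftrightarrow> (\<forall>A S. S \<subseteq> U A \<longrightarrow> op1 A S = op2 (F A) S)"

lemma sem_subset:
  assumes "\<And>S. S \<subseteq> X \<Longrightarrow> m S \<subseteq> X" and "\<And>p. V p \<subseteq> X"
  shows "sem m X V \<phi> \<subseteq> X"
  by (induction \<phi>) (auto simp: assms)

lemma sem_cong:
  assumes "\<And>S. S \<subseteq> X \<Longrightarrow> m S \<subseteq> X" and "\<And>S. S \<subseteq> X \<Longrightarrow> m S = m' S"
    and "\<And>p. V p \<subseteq> X"
  shows "sem m X V \<phi> = sem m' X V \<phi>"
proof (induction \<phi>)
  case (Box \<phi>)
  have "sem m X V \<phi> \<subseteq> X" by (rule sem_subset) (use assms in blast)+
  with Box show ?case by (simp add: assms(2))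
qed simp_all

lemma dsem_subset:
  assumes "\<And>a S. S \<subseteq> X \<Longrightarrow> m a S \<subseteq> X" and "\<And>p. V p \<subseteq> X"
  shows "dsem m X V \<phi> \<subseteq> X"
  by (induction \<phi>) (auto simp: assms)

lemma dsem_cong:
  assumes "\<And>a S. S \<subseteq> X \<Longrightarrow> m a S \<subseteq> X" and "\<And>a S. S \<subseteq> X \<Longrightarrow> m a S = m' a S"
    and "\<And>p. V p \<subseteq> X"
  shows "dsem m X V \<phi> = dsem m' X V \<phi>"
proof (induction \<phi>)
  case (DBox a \<phi>)
  have "dsem m X V \<phi> \<subseteq> X" by (rule dsem_subset) (use assms in blast)+
  with DBox show ?case by (simp add: assms(2))
next
  case (K a b)
  show ?case by (simp add: assms(2) cong: conj_cong imp_cong)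
qed simp_all

lemma cabao_functor_closed:
  "cabao_functor U Hom op \<Longrightarrow> S \<subseteq> U A \<Longrightarrow> op A S \<subseteq> U A"
  unfolding cabao_functor_def by blast

lemma preserves_L_iff_preserves_operators:
  fixes U1 :: "'a \<Rightarrow> 'u set" and op1 :: "'a \<Rightarrow> 'u set \<Rightarrow> 'u set"
    and op2 :: "'b \<Rightarrow> 'u set \<Rightarrow> 'u set" and F :: "'a \<Rightarrow> 'b"
  assumes "cabao_functor U1 Hom1 op1"
  shows "preserves_L U1 op1 op2 F TYPE('p) \<longleftrightarrow> preserves_operators U1 op1 op2 F"
proof
  assume pres: "preserves_L U1 op1 op2 F TYPE('p)"
  show "preserves_operators U1 op1 op2 F"
    unfolding preserves_operators_def
  proof (intro allI impI)
    fix A S assume "S \<subseteq> U1 A"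
    then have "sem (op1 A) (U1 A) (\<lambda>_::'p. S) (Box (Var undefined))
             = sem (op2 (F A)) (U1 A) (\<lambda>_. S) (Box (Var undefined))"
      using pres unfolding preserves_L_def
      by (elim allE[of _ "U1 A"] allE[of _ A] allE[of _ "\<lambda>_. S"] allE[of _ "Box (Var undefined)"]) simp
    then show "op1 A S = op2 (F A) S" by simp
  qed
next
  assume ops: "preserves_operators U1 op1 op2 F"
  show "preserves_L U1 op1 op2 F TYPE('p)"
    unfolding preserves_L_def
  proof (intro allI impI)
    fix X A and V :: "'p \<Rightarrow> 'u set" and \<phi>
    assume X: "U1 A = X" and V: "\<forall>p. V p \<subseteq> X"
    show "sem (op1 A) X V \<phi> = sem (op2 (F A)) X V \<phi>"
    proof (rule sem_cong)
      show "\<And>S. S \<subseteq> X \<Longrightarrow> op1 A S \<subseteq> X"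
        using X cabao_functor_closed[OF assms] by blast
      show "\<And>S. S \<subseteq> X \<Longrightarrow> op1 A S = op2 (F A) S"
        using X ops unfolding preserves_operators_def by blast
    qed (use V in blast)
  qed
qed

lemma preserves_LD_iff_preserves_operators:
  fixes U1 :: "'a \<Rightarrow> 'u set" and op1 :: "'a \<Rightarrow> 'u set \<Rightarrow> 'u set"
    and op2 :: "'b \<Rightarrow> 'u set \<Rightarrow> 'u set" and F :: "'a \<Rightarrow> 'b"
  assumes "cabao_functor U1 Hom1 op1"
  shows "preserves_LD U1 op1 op2 F TYPE('p) TYPE('i) \<longleftrightarrow> preserves_operators U1 op1 op2 F"
proof
  assume pres: "preserves_LD U1 op1 op2 F TYPE('p) TYPE('i)"
  show "preserves_operators U1 op1 op2 F"
    unfolding preserves_operators_def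
  proof (intro allI impI)
    fix A S assume "S \<subseteq> U1 A"
    then have "dsem (\<lambda>_::'i. op1 A) (U1 A) (\<lambda>_::'p. S) (DBox undefined (DVar undefined))
             = dsem (\<lambda>_. op2 (F A)) (U1 A) (\<lambda>_. S) (DBox undefined (DVar undefined))"
      using pres unfolding preserves_LD_def
      by (elim allE[of _ "U1 A"] allE[of _ "\<lambda>_. A"] allE[of _ "\<lambda>_. S"]
          allE[of _ "DBox undefined (DVar undefined)"]) simp
    then show "op1 A S = op2 (F A) S" by simp
  qed
next
  assume ops: "preserves_operators U1 op1 op2 F"
  show "preserves_LD U1 op1 op2 F TYPE('p) TYPE('i)"
    unfolding preserves_LD_def
  proof (intro allI impI)
    fix X and A :: "'i \<Rightarrow> 'a" and V :: "'p \<Rightarrow> 'u set" and \<phi> :: "('p, 'i) dfm"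
    assume X: "\<forall>a. U1 (A a) = X" and V: "\<forall>p. V p \<subseteq> X"
    show "dsem (\<lambda>a. op1 (A a)) X V \<phi> = dsem (\<lambda>a. op2 (F (A a))) X V \<phi>"
    proof (rule dsem_cong)
      show "\<And>a S. S \<subseteq> X \<Longrightarrow> op1 (A a) S \<subseteq> X"
        using X cabao_functor_closed[OF assms] by blast
      show "\<And>a S. S \<subseteq> X \<Longrightarrow> op1 (A a) S = op2 (F (A a)) S"
        using X ops unfolding preserves_operators_def by blast
    qed (use V in blast)
  qed
qed

theorem theorem4:
  fixes U1 :: "'a \<Rightarrow> 'u set" and Hom1 :: "'a \<Rightarrow> 'a \<Rightarrow> ('u \<Rightarrow> 'u) set"
    and op1 :: "'a \<Rightarrow> 'u set \<Rightarrow> 'u set"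
    and U2 :: "'b \<Rightarrow> 'u set" and Hom2 :: "'b \<Rightarrow> 'b \<Rightarrow> ('u \<Rightarrow> 'u) set"
    and op2 :: "'b \<Rightarrow> 'u set \<Rightarrow> 'u set"
    and F :: "'a \<Rightarrow> 'b"
  assumes "modal_cat U1 Hom1 op1"
    and "modal_cat U2 Hom2 op2"
    and "concrete_functor U1 Hom1 U2 Hom2 F"
  shows "preserves_LD U1 op1 op2 F TYPE('p) TYPE('i) \<longleftrightarrow> preserves_L U1 op1 op2 F TYPE('p)"
proof -
  have "cabao_functor U1 Hom1 op1"
    using assms(1) unfolding modal_cat_def by blast
  then show ?thesis
    using preserves_LD_iff_preserves_operators preserves_L_iff_preserves_operators by blast
qed

end
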